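(* Let $\mathcal H=\{H_1,\dots,H_n\}$ be oriented affine hyperplanes in $\mathbb R^d$ such that $(\mathcal H,\mathbb R^d)$ has generic intersections, i.e. for every $\sigma\subseteq[n]$ with $\bigcap_{i\in\sigma}H_i\neq\emptyset$ one has $\dim\bigcap_{i\in\sigma}H_i=d-|\sigma|$. Then $\Gamma(\mathrm{code}(\mathcal H,\mathbb R^d))$ is shellable.
   Context: $H_i=\{x:w_i\cdot x-h_i=0\}$ with $w_i\ne0$ and $H_i^+=\{w_i\cdot x-h_i>0\}$. $\mathrm{code}(\mathcal H,\mathbb R^d)$ is the set of $\sigma\subseteq[n]$ such that $\bigl(\bigcap_{i\in\sigma}H_i^+\bigr)\setminus\bigcup_{j\notin\sigma}H_j^+\neq\emptyset$ (the empty intersection being $\mathbb R^d$). The polar complex $\Gamma(\mathcal C)$ is the simplicial complex on $[n]\sqcup\{\bar1,\dots,\bar n\}$ consisting of all subsets of the sets $\sigma\sqcup\{\bar i:i\in[n]\setminus\sigma\}$, $\sigma\in\mathcal C$; it is pure of dimension $n-1$. A pure $k$-dimensional complex is shellable if its facets admit an ordering $F_1,\dots,F_t$ such that for each $i>1$, the complex of all subsets of $F_i$ intersected with the complex of all subsets of $F_1,\dots,F_{i-1}$ is pure of dimension $k-1$. *)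

theory Defs
  imports "HOL-Analysis.Analysis"
begin

text \<open>Oriented affine hyperplanes in R^d (R^d = a euclidean_space of dimension d), indexed by
  [n] = {1..n}: H_i = {x. w i \<bullet> x - h i = 0}, positive open half-space H_i^+.\<close>

definition hyp :: "(nat \<Rightarrow> 'a::euclidean_space) \<Rightarrow> (nat \<Rightarrow> real) \<Rightarrow> nat \<Rightarrow> 'a set" where
  "hyp w h i = {x. w i \<bullet> x - h i = 0}"

definition hyp_pos :: "(nat \<Rightarrow> 'a::euclidean_space) \<Rightarrow> (nat \<Rightarrow> real) \<Rightarrow> nat \<Rightarrow> 'a set" where
  "hyp_pos w h i = {x. w i \<bullet> x - h i > 0}"

definition generic_intersections :: "nat \<Rightarrow> (nat \<Rightarrow> 'a::euclidean_space) \<Rightarrow> (nat \<Rightarrow> real) \<Rightarrow> bool" where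
  "generic_intersections n w h \<longleftrightarrow>
     (\<forall>\<sigma> \<subseteq> {1..n}. (\<Inter>i\<in>\<sigma>. hyp w h i) \<noteq> {} \<longrightarrow>
        aff_dim (\<Inter>i\<in>\<sigma>. hyp w h i) = int DIM('a) - int (card \<sigma>))"

text \<open>code(H, R^d); an empty intersection is UNIV.\<close>
definition hcode :: "nat \<Rightarrow> (nat \<Rightarrow> 'a::euclidean_space) \<Rightarrow> (nat \<Rightarrow> real) \<Rightarrow> nat set set" where
  "hcode n w h = {\<sigma>. \<sigma> \<subseteq> {1..n} \<and>
     (\<Inter>i\<in>\<sigma>. hyp_pos w h i) - (\<Union>j\<in>{1..n} - \<sigma>. hyp_pos w h j) \<noteq> {}}"

text \<open>Polar complex on vertex set [n] \<sqcup> {bar 1..bar n}, with i encoded as Inl i and bar i as Inr i.\<close>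
definition polar_facet :: "nat \<Rightarrow> nat set \<Rightarrow> (nat + nat) set" where
  "polar_facet n \<sigma> = Inl ` \<sigma> \<union> Inr ` ({1..n} - \<sigma>)"

definition polar_complex :: "nat \<Rightarrow> nat set set \<Rightarrow> (nat + nat) set set" where
  "polar_complex n C = {F. \<exists>\<sigma>\<in>C. F \<subseteq> polar_facet n \<sigma>}"

text \<open>Simplicial complexes as sets of (finite) faces.\<close>
definition facets :: "'v set set \<Rightarrow> 'v set set" where
  "facets K = {F \<in> K. \<forall>G\<in>K. F \<subseteq> G \<longrightarrow> G = F}"

text \<open>pure_dim K k: K is pure of dimension k, i.e. K is nonempty, every face lies in a facet and
  every facet has k+1 elements (k is an integer; dimension -1 means K = {{}}).\<close>
definition pure_dim :: "'v set set \<Rightarrow> int \<Rightarrow> bool" where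
  "pure_dim K k \<longleftrightarrow> K \<noteq> {} \<and> (\<forall>F\<in>K. \<exists>G\<in>facets K. F \<subseteq> G)
      \<and> (\<forall>F\<in>facets K. int (card F) = k + 1)"

definition shellable :: "'v set set \<Rightarrow> bool" where
  "shellable K \<longleftrightarrow> (\<exists>k. pure_dim K k \<and>
     (\<exists>fs. distinct fs \<and> set fs = facets K \<and>
        (\<forall>i. 0 < i \<and> i < length fs \<longrightarrow>
           pure_dim (Pow (fs ! i) \<inter> (\<Union>j<i. Pow (fs ! j))) (k - 1))))"

end

theory Submission
  imports Defs "HOL-Library.List_Lexorder"
begin

text \<open>Order the codewords \<sigma> by the distance from the origin to their cells, ties broken by
  card \<sigma>. The polar complex is shelled in this order as soon as any later \<sigma> and earlier \<tau> are
  separated by some e such that toggling e in \<sigma> gives an even earlier codeword.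
  Let p be the point of the closed cell of \<sigma> nearest to the origin. Genericity makes the normals of
  the hyperplanes through p linearly independent, so near p every sign pattern on them is realised
  by a cell, and optimality of p gives p \<bullet> d \<ge> 0 for every direction d entering the cell of \<sigma>.
  If the nearest point q of \<tau> differs from p, expanding q - p in the basis dual to the active
  normals yields an active hyperplane separating \<sigma> from \<tau> whose crossing strictly decreases the
  distance; if q = p, then \<sigma> and \<tau> differ only at active hyperplanes, and toggling an element of
  \<sigma> - \<tau> keeps the distance and decreases the cardinality.\<close>

section \<open>Shelling polar complexes\<close>

definition toggle :: "nat \<Rightarrow> nat set \<Rightarrow> nat set" where
  "toggle e \<sigma> = (if e \<in> \<sigma> then \<sigma> - {e} else insert e \<sigma>)"

definition polar_vertex :: "nat set \<Rightarrow> nat \<Rightarrow> nat + nat" where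
  "polar_vertex \<sigma> e = (if e \<in> \<sigma> then Inl e else Inr e)"

lemma card_polar_facet:
  assumes "\<sigma> \<subseteq> {1..n}"
  shows "card (polar_facet n \<sigma>) = n"
proof -
  have fin: "finite \<sigma>" using assms finite_subset by blast
  have "card (polar_facet n \<sigma>) = card (Inl ` \<sigma> :: (nat + nat) set) + card (Inr ` ({1..n} - \<sigma>) :: (nat + nat) set)"
    unfolding polar_facet_def by (rule card_Un_disjoint) (use fin in auto)
  also have "\<dots> = card \<sigma> + card ({1..n} - \<sigma>)"
    by (simp add: card_image)
  also have "\<dots> = n"
    using assms fin card_mono[OF _ assms] by (simp add: card_Diff_subset)
  finally show ?thesis .
qed

lemma polar_facet_subset_imp_eq:
  assumes "\<tau> \<subseteq> {1..n}" "polar_facet n \<sigma> \<subseteq> polar_facet n \<tau>"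
  shows "\<sigma> = \<tau>"
proof
  show "\<sigma> \<subseteq> \<tau>" using assms(2) by (auto simp: polar_facet_def)
  show "\<tau> \<subseteq> \<sigma>"
  proof
    fix x assume "x \<in> \<tau>"
    show "x \<in> \<sigma>"
    proof (rule ccontr)
      assume "x \<notin> \<sigma>"
      then have "Inr x \<in> polar_facet n \<sigma>" using \<open>x \<in> \<tau>\<close> assms(1) by (auto simp: polar_facet_def)
      then have "Inr x \<in> polar_facet n \<tau>" using assms(2) by blast
      then show False using \<open>x \<in> \<tau>\<close> by (auto simp: polar_facet_def)
    qed
  qed
qed

lemma polar_facet_Int_toggle:
  assumes "e \<in> {1..n}"
  shows "polar_facet n \<sigma> \<inter> polar_facet n (toggle e \<sigma>) = polar_facet n \<sigma> - {polar_vertex \<sigma> e}"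
  using assms by (auto simp: polar_facet_def toggle_def polar_vertex_def)

lemma polar_vertex_in_polar_facet: "e \<in> {1..n} \<Longrightarrow> polar_vertex \<sigma> e \<in> polar_facet n \<sigma>"
  by (auto simp: polar_facet_def polar_vertex_def)

lemma polar_vertex_notin_polar_facet: "(e \<in> \<sigma> \<longleftrightarrow> e \<notin> \<tau>) \<Longrightarrow> polar_vertex \<sigma> e \<notin> polar_facet n \<tau>"
  by (auto simp: polar_facet_def polar_vertex_def)

lemma facets_polar_complex:
  assumes "C \<subseteq> Pow {1..n}"
  shows "facets (polar_complex n C) = polar_facet n ` C"
proof (rule set_eqI, rule iffI)
  fix F assume F: "F \<in> facets (polar_complex n C)"
  then obtain \<sigma> where "\<sigma> \<in> C" "F \<subseteq> polar_facet n \<sigma>" by (auto simp: facets_def polar_complex_def)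
  moreover have "polar_facet n \<sigma> \<in> polar_complex n C" using \<open>\<sigma> \<in> C\<close> by (auto simp: polar_complex_def)
  ultimately show "F \<in> polar_facet n ` C" using F by (auto simp: facets_def)
next
  fix F assume "F \<in> polar_facet n ` C"
  then obtain \<sigma> where \<sigma>: "\<sigma> \<in> C" "F = polar_facet n \<sigma>" by blast
  have "G = F" if G: "G \<in> polar_complex n C" "F \<subseteq> G" for G
  proof -
    obtain \<tau> where "\<tau> \<in> C" "G \<subseteq> polar_facet n \<tau>" using G(1) unfolding polar_complex_def by blast
    then show ?thesis using polar_facet_subset_imp_eq[of \<tau> n \<sigma>] \<sigma> assms G(2) by blast
  qed
  then show "F \<in> facets (polar_complex n C)" using \<sigma> by (auto simp: facets_def polar_complex_def)
qed

lemma pure_dim_polar_complex: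
  assumes "C \<subseteq> Pow {1..n}" "C \<noteq> {}"
  shows "pure_dim (polar_complex n C) (int n - 1)"
  unfolding pure_dim_def facets_polar_complex[OF assms(1)]
  using assms card_polar_facet by (auto simp: polar_complex_def)

lemma pure_dim_polar_facet_Int_Union:
  assumes \<sigma>: "\<sigma> \<subseteq> {1..n}" and T: "\<And>\<tau>. \<tau> \<in> T \<Longrightarrow> \<tau> \<subseteq> {1..n}" "\<sigma> \<notin> T" "T \<noteq> {}"
    and adjacent: "\<And>\<tau>. \<tau> \<in> T \<Longrightarrow> \<exists>e. (e \<in> \<sigma> \<longleftrightarrow> e \<notin> \<tau>) \<and> toggle e \<sigma> \<in> T"
  shows "pure_dim (Pow (polar_facet n \<sigma>) \<inter> (\<Union>\<tau>\<in>T. Pow (polar_facet n \<tau>))) (int n - 2)"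
proof -
  let ?F = "polar_facet n \<sigma>"
  let ?L = "Pow ?F \<inter> (\<Union>\<tau>\<in>T. Pow (polar_facet n \<tau>))"
  let ?R = "\<lambda>e. ?F - {polar_vertex \<sigma> e}"
  have ridge: "?R e \<in> facets ?L" if e: "e \<in> {1..n}" "toggle e \<sigma> \<in> T" for e
  proof -
    have "?R e \<in> ?L" using polar_facet_Int_toggle[OF e(1)] e(2) by blast
    moreover have "Y = ?R e" if "Y \<in> ?L" "?R e \<subseteq> Y" for Y
    proof (rule ccontr)
      assume "Y \<noteq> ?R e"
      with that have "Y = ?F" by blast
      with \<open>Y \<in> ?L\<close> obtain \<tau> where "\<tau> \<in> T" "?F \<subseteq> polar_facet n \<tau>" by auto
      with T polar_facet_subset_imp_eq show False by blast
    qed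
    ultimately show ?thesis by (auto simp: facets_def)
  qed
  have cover: "\<exists>e\<in>{1..n}. toggle e \<sigma> \<in> T \<and> X \<subseteq> ?R e" if "X \<in> ?L" for X
  proof -
    from that obtain \<tau> where \<tau>: "\<tau> \<in> T" "X \<subseteq> ?F" "X \<subseteq> polar_facet n \<tau>" by auto
    obtain e where e: "e \<in> \<sigma> \<longleftrightarrow> e \<notin> \<tau>" "toggle e \<sigma> \<in> T" using adjacent[OF \<tau>(1)] by blast
    have "e \<in> {1..n}" using e(1) \<sigma> T(1)[OF \<tau>(1)] by blast
    with \<tau> e polar_vertex_notin_polar_facet[OF e(1)] show ?thesis by blast
  qed
  have card_ridge: "int (card (?R e)) = int n - 2 + 1" if "e \<in> {1..n}" for e
  proof -
    have "card ?F = n" using \<sigma> by (rule card_polar_facet)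
    moreover have "finite ?F" using \<sigma> by (auto simp: polar_facet_def finite_subset)
    ultimately show ?thesis using polar_vertex_in_polar_facet[OF that] that by auto
  qed
  show ?thesis unfolding pure_dim_def
  proof (intro conjI ballI)
    show "?L \<noteq> {}" using T(3) by blast
    show "\<exists>G\<in>facets ?L. X \<subseteq> G" if "X \<in> ?L" for X
      using cover[OF that] ridge by blast
    show "int (card F) = int n - 2 + 1" if F: "F \<in> facets ?L" for F
    proof -
      have "F \<in> ?L" using F by (simp add: facets_def)
      then obtain e where e: "e \<in> {1..n}" "toggle e \<sigma> \<in> T" "F \<subseteq> ?R e"
        using cover by blast
      then have "F = ?R e" using F ridge[OF e(1,2)] by (auto simp: facets_def)
      then show ?thesis using card_ridge[OF e(1)] by simp
    qed
  qed
qed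

lemma shellable_polar_complex_of_list:
  assumes C: "C \<subseteq> Pow {1..n}" "C \<noteq> {}" and ys: "distinct ys" "set ys = C"
    and adjacent: "\<And>i \<tau>. i < length ys \<Longrightarrow> \<tau> \<in> set (take i ys) \<Longrightarrow>
       \<exists>e. (e \<in> ys ! i \<longleftrightarrow> e \<notin> \<tau>) \<and> toggle e (ys ! i) \<in> set (take i ys)"
  shows "shellable (polar_complex n C)"
proof -
  define fs where "fs = map (polar_facet n) ys"
  have "inj_on (polar_facet n) C"
    using C(1) polar_facet_subset_imp_eq by (intro inj_onI) (metis PowD subsetD subset_refl)
  then have "distinct fs" using ys by (simp add: fs_def distinct_map)
  moreover have "set fs = facets (polar_complex n C)"
    using ys(2) by (simp add: fs_def facets_polar_complex[OF C(1)])
  moreover have "pure_dim (Pow (fs ! i) \<inter> (\<Union>j<i. Pow (fs ! j))) (int n - 1 - 1)"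
    if i: "0 < i" "i < length fs" for i
  proof -
    have "(\<Union>j<i. Pow (fs ! j)) = (\<Union>\<tau>\<in>set (take i ys). Pow (polar_facet n \<tau>))"
      using i by (simp add: fs_def flip: nth_image lessThan_atLeast0)
    moreover have "pure_dim (Pow (polar_facet n (ys ! i)) \<inter> (\<Union>\<tau>\<in>set (take i ys). Pow (polar_facet n \<tau>))) (int n - 2)"
    proof (rule pure_dim_polar_facet_Int_Union)
      show "ys ! i \<subseteq> {1..n}" "\<And>\<tau>. \<tau> \<in> set (take i ys) \<Longrightarrow> \<tau> \<subseteq> {1..n}"
        using i C(1) ys(2) nth_mem[of i ys] by (auto simp: fs_def dest!: in_set_takeD)
      show "ys ! i \<notin> set (take i ys)"
        using i ys(1) by (auto simp: fs_def in_set_conv_nth nth_eq_iff_index_eq)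
      show "set (take i ys) \<noteq> {}" using i by (auto simp: fs_def)
    qed (use adjacent i in \<open>simp add: fs_def\<close>)
    ultimately show ?thesis using i by (simp add: fs_def)
  qed
  ultimately show ?thesis
    unfolding shellable_def using pure_dim_polar_complex[OF C] by blast
qed

lemma shellable_polar_complexI:
  fixes key :: "nat set \<Rightarrow> 'k::linorder"
  assumes C: "C \<subseteq> Pow {1..n}" "C \<noteq> {}"
    and descent: "\<And>\<sigma> \<tau>. \<sigma> \<in> C \<Longrightarrow> \<tau> \<in> C \<Longrightarrow> \<tau> \<noteq> \<sigma> \<Longrightarrow> key \<tau> \<le> key \<sigma> \<Longrightarrow>
       \<exists>e. (e \<in> \<sigma> \<longleftrightarrow> e \<notin> \<tau>) \<and> toggle e \<sigma> \<in> C \<and> key (toggle e \<sigma>) < key \<sigma>"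
  shows "shellable (polar_complex n C)"
proof -
  have "finite C" using C(1) finite_subset by fastforce
  then obtain xs where xs: "distinct xs" "set xs = C" using finite_distinct_list by blast
  define ys where "ys = sort_key key xs"
  have ys: "distinct ys" "set ys = C" and sorted: "sorted (map key ys)"
    using xs by (simp_all add: ys_def)
  show ?thesis
  proof (rule shellable_polar_complex_of_list[OF C ys])
    fix i \<tau> assume i: "i < length ys" and "\<tau> \<in> set (take i ys)"
    then obtain j where j: "j < i" "\<tau> = ys ! j" by (auto simp: in_set_conv_nth)
    have "key \<tau> \<le> key (ys ! i)" using sorted_nth_mono[OF sorted, of j i] i j by simp
    moreover have "\<tau> \<noteq> ys ! i" using ys(1) i j by (simp add: nth_eq_iff_index_eq)
    moreover have "ys ! i \<in> C" "\<tau> \<in> C" using i j ys(2) by auto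
    ultimately obtain e where e: "e \<in> ys ! i \<longleftrightarrow> e \<notin> \<tau>" "toggle e (ys ! i) \<in> C"
      "key (toggle e (ys ! i)) < key (ys ! i)"
      using descent by blast
    then obtain k where k: "k < length ys" "ys ! k = toggle e (ys ! i)"
      using ys(2) by (metis in_set_conv_nth)
    have "k < i"
    proof (rule ccontr)
      assume "\<not> k < i"
      then have "key (ys ! i) \<le> key (ys ! k)" using sorted_nth_mono[OF sorted, of i k] k(1) by simp
      with k(2) e(3) show False by simp
    qed
    then have "toggle e (ys ! i) \<in> set (take i ys)"
      using k by (auto simp: in_set_conv_nth)
    with e(1) show "\<exists>e. (e \<in> ys ! i \<longleftrightarrow> e \<notin> \<tau>) \<and> toggle e (ys ! i) \<in> set (take i ys)" by blast
  qed
qed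

section \<open>Dual bases and one-sided limits\<close>

lemma independent_dual_vector:
  fixes v :: "'i \<Rightarrow> 'a::euclidean_space"
  assumes "independent (v ` A)" "inj_on v A" "f \<in> A"
  shows "\<exists>u. v f \<bullet> u = 1 \<and> (\<forall>g\<in>A - {f}. v g \<bullet> u = 0)"
proof -
  obtain y z where y: "y \<in> span (v ` (A - {f}))"
    and z: "\<And>x. x \<in> span (v ` (A - {f})) \<Longrightarrow> orthogonal z x" and vf: "v f = y + z"
    using orthogonal_subspace_decomp_exists[of "v ` (A - {f})" "v f"] by metis
  have "v ` (A - {f}) = v ` A - {v f}" using assms(2,3) by (auto simp: inj_on_def)
  then have "z \<noteq> 0" using assms(1,3) y vf dependent_def by force
  have yz: "y \<bullet> z = 0" using z[OF y] by (simp add: orthogonal_def inner_commute)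
  define u where "u = z /\<^sub>R (z \<bullet> z)"
  have "v f \<bullet> u = 1" using \<open>z \<noteq> 0\<close> yz by (simp add: u_def vf inner_add_left)
  moreover have "v g \<bullet> u = 0" if "g \<in> A - {f}" for g
    using z[OF span_base[OF imageI[OF that]]] by (simp add: u_def orthogonal_def inner_commute)
  ultimately show ?thesis by blast
qed

lemma dual_basis_exists:
  fixes v :: "'i \<Rightarrow> 'a::euclidean_space"
  assumes "independent (v ` A)" "inj_on v A"
  shows "\<exists>u. \<forall>g\<in>A. \<forall>g'\<in>A. v g' \<bullet> u g = (if g' = g then 1 else 0)"
proof -
  have "\<forall>g\<in>A. \<exists>x. \<forall>g'\<in>A. v g' \<bullet> x = (if g' = g then 1 else 0)"
    using independent_dual_vector[OF assms] by fastforce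
  then show ?thesis by (rule bchoice)
qed

text \<open>The intersection of the hyperplanes through p indexed by A is p plus the orthogonal
  complement of their normals, so genericity forces the normals to span a space of dimension card A.\<close>
lemma generic_intersections_independent:
  fixes w :: "nat \<Rightarrow> 'a::euclidean_space"
  assumes gen: "generic_intersections n w h" and A: "A \<subseteq> {1..n}"
    and p: "\<forall>g\<in>A. w g \<bullet> p = h g"
  shows "independent (w ` A) \<and> inj_on w A"
proof -
  have fin: "finite A" using A finite_subset by blast
  define S where "S = {y. \<forall>x\<in>span (w ` A). orthogonal x y}"
  have I: "(\<Inter>i\<in>A. hyp w h i) = (+) p ` S"
  proof (rule set_eqI, rule iffI)
    fix x assume "x \<in> (\<Inter>i\<in>A. hyp w h i)"
    then have xa: "\<forall>g\<in>A. w g \<bullet> (x - p) = 0" using p by (auto simp: hyp_def inner_diff_right)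
    have "x - p \<in> S" unfolding S_def
    proof (intro CollectI ballI)
      fix a assume "a \<in> span (w ` A)"
      then show "orthogonal a (x - p)"
        by (rule span_induct) (auto simp: xa orthogonal_def inner_add_left subspace_def)
    qed
    then show "x \<in> (+) p ` S" by (metis add.commute diff_add_cancel image_eqI)
  next
    fix x assume "x \<in> (+) p ` S"
    then obtain y where "y \<in> S" "x = p + y" by auto
    then have "\<forall>g\<in>A. w g \<bullet> y = 0" unfolding S_def by (auto simp: orthogonal_def span_base)
    then show "x \<in> (\<Inter>i\<in>A. hyp w h i)" using p \<open>x = p + y\<close> by (auto simp: hyp_def inner_add_right)
  qed
  have "p \<in> (\<Inter>i\<in>A. hyp w h i)" using p by (auto simp: hyp_def)
  then have "aff_dim ((+) p ` S) = int DIM('a) - int (card A)"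
    using gen A I unfolding generic_intersections_def by auto
  moreover have "dim S + dim (span (w ` A)) = DIM('a)"
    using dim_subspace_orthogonal_to_vectors[of "span (w ` A)" UNIV] by (simp add: S_def)
  moreover have "aff_dim ((+) p ` S) = int (dim S)"
    by (simp add: aff_dim_translation_eq aff_dim_subspace S_def subspace_orthogonal_to_vectors)
  ultimately have dim: "dim (w ` A) = card A" by simp
  have "dim (w ` A) \<le> card (w ` A)" "card (w ` A) \<le> card A"
    using fin by (simp_all add: dim_le_card span_superset card_image_le)
  then have card: "card (w ` A) = card A" using dim by linarith
  then have "inj_on w A" using fin by (simp add: inj_on_iff_eq_card)
  moreover have "independent (w ` A)"
    using card_eq_dim[of "w ` A" "w ` A"] card dim fin by (simp add: span_superset)
  ultimately show ?thesis by blast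
qed

lemma nonneg_if_eventually_nonneg_at_right:
  fixes a c :: real
  assumes "eventually (\<lambda>t. 0 \<le> t * a + t\<^sup>2 * c) (at_right 0)"
  shows "0 \<le> a"
proof -
  have "eventually (\<lambda>t. 0 \<le> a + t * c) (at_right (0::real))"
    using assms eventually_at_right_less[of "0::real"]
  proof eventually_elim
    case (elim t)
    then have "0 \<le> t * (a + t * c)" by (simp add: algebra_simps power2_eq_square)
    with elim show ?case by (simp add: zero_le_mult_iff)
  qed
  moreover have "((\<lambda>t. a + t * c) \<longlongrightarrow> a + 0 * c) (at_right (0::real))"
    by (intro tendsto_intros)
  ultimately show ?thesis
    using tendsto_lowerbound trivial_limit_at_right_real by fastforce
qed

lemma nonneg_if_nonneg_perturbations:
  fixes a c :: real
  assumes "\<And>e. 0 < e \<Longrightarrow> 0 \<le> a + e * c"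
  shows "0 \<le> a"
proof (rule nonneg_if_eventually_nonneg_at_right[of a c])
  show "eventually (\<lambda>t. 0 \<le> t * a + t\<^sup>2 * c) (at_right 0)"
    using eventually_at_right_less[of "0::real"]
  proof eventually_elim
    case (elim t)
    then have "0 \<le> t * (a + t * c)" using assms by simp
    then show ?case by (simp add: algebra_simps power2_eq_square)
  qed
qed

lemma eventually_norm_less_at_right:
  fixes p d :: "'a::real_inner"
  assumes "p \<bullet> d < 0"
  shows "eventually (\<lambda>t. norm (p + t *\<^sub>R d) < norm p) (at_right 0)"
proof -
  have "((\<lambda>t. 2 * (p \<bullet> d) + t * (d \<bullet> d)) \<longlongrightarrow> 2 * (p \<bullet> d) + 0 * (d \<bullet> d)) (at_right (0::real))"
    by (intro tendsto_intros)
  then have "eventually (\<lambda>t. 2 * (p \<bullet> d) + t * (d \<bullet> d) < 0) (at_right 0)"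
    using assms by (auto elim!: order_tendstoD(2))
  with eventually_at_right_less[of "0::real"]
  show ?thesis
  proof eventually_elim
    case (elim t)
    have "(p + t *\<^sub>R d) \<bullet> (p + t *\<^sub>R d) = p \<bullet> p + t * (2 * (p \<bullet> d) + t * (d \<bullet> d))"
      by (simp add: inner_add_left inner_add_right inner_commute algebra_simps)
    also have "\<dots> < p \<bullet> p" using elim by (simp add: mult_pos_neg)
    finally show ?case by (simp add: norm_lt)
  qed
qed

section \<open>Cells of a generic arrangement\<close>

locale generic_arrangement =
  fixes n :: nat and w :: "nat \<Rightarrow> 'a::euclidean_space" and h :: "nat \<Rightarrow> real"
  assumes generic: "generic_intersections n w h"
begin

definition codeword :: "'a \<Rightarrow> nat set" where
  "codeword x = {i \<in> {1..n}. h i < w i \<bullet> x}"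

definition cell :: "nat set \<Rightarrow> 'a set" where
  "cell \<sigma> = {x. codeword x = \<sigma>}"

definition cell_dist :: "nat set \<Rightarrow> real" where
  "cell_dist \<sigma> = infdist 0 (cell \<sigma>)"

definition cell_key :: "nat set \<Rightarrow> real list" where
  "cell_key \<sigma> = [cell_dist \<sigma>, real (card \<sigma>)]"

definition active :: "'a \<Rightarrow> nat set" where
  "active p = {g \<in> {1..n}. w g \<bullet> p = h g}"

lemma hcode_eq_range_codeword: "hcode n w h = range codeword"
proof (rule set_eqI, rule iffI)
  fix \<sigma> assume "\<sigma> \<in> hcode n w h"
  then obtain x where "\<sigma> \<subseteq> {1..n}" "x \<in> (\<Inter>i\<in>\<sigma>. hyp_pos w h i)" "x \<notin> (\<Union>j\<in>{1..n} - \<sigma>. hyp_pos w h j)"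
    unfolding hcode_def by blast
  then have "codeword x = \<sigma>" by (auto simp: codeword_def hyp_pos_def)
  then show "\<sigma> \<in> range codeword" by blast
next
  fix \<sigma> assume "\<sigma> \<in> range codeword"
  then obtain x where "codeword x = \<sigma>" by blast
  then have "\<sigma> \<subseteq> {1..n}" "x \<in> (\<Inter>i\<in>\<sigma>. hyp_pos w h i) - (\<Union>j\<in>{1..n} - \<sigma>. hyp_pos w h j)"
    by (auto simp: codeword_def hyp_pos_def)
  then show "\<sigma> \<in> hcode n w h" unfolding hcode_def by blast
qed

lemma cell_key_le_iff:
  "cell_key \<tau> \<le> cell_key \<sigma> \<longleftrightarrow>
     cell_dist \<tau> < cell_dist \<sigma> \<or> cell_dist \<tau> = cell_dist \<sigma> \<and> card \<tau> \<le> card \<sigma>"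
  by (auto simp: cell_key_def)

lemma cell_key_less_iff:
  "cell_key \<tau> < cell_key \<sigma> \<longleftrightarrow>
     cell_dist \<tau> < cell_dist \<sigma> \<or> cell_dist \<tau> = cell_dist \<sigma> \<and> card \<tau> < card \<sigma>"
  by (auto simp: cell_key_def)

lemma codeword_subset: "codeword x \<subseteq> {1..n}"
  by (auto simp: codeword_def)

lemma finite_active: "finite (active p)"
  by (simp add: active_def)

lemma closure_cell_halfspaces:
  assumes "p \<in> closure (cell \<sigma>)" "g \<in> {1..n}"
  shows "(g \<in> \<sigma> \<longrightarrow> h g \<le> w g \<bullet> p) \<and> (g \<notin> \<sigma> \<longrightarrow> w g \<bullet> p \<le> h g)"
proof (intro conjI impI)
  assume "g \<in> \<sigma>"
  then have "cell \<sigma> \<subseteq> {x. h g \<le> w g \<bullet> x}" by (auto simp: cell_def codeword_def)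
  then show "h g \<le> w g \<bullet> p" using closure_minimal[OF _ closed_halfspace_ge] assms(1) by blast
next
  assume "g \<notin> \<sigma>"
  then have "cell \<sigma> \<subseteq> {x. w g \<bullet> x \<le> h g}" using assms(2) by (auto simp: cell_def codeword_def)
  then show "w g \<bullet> p \<le> h g" using closure_minimal[OF _ closed_halfspace_le] assms(1) by blast
qed

lemma closure_cell_inactive:
  assumes "p \<in> closure (cell \<sigma>)" "g \<in> {1..n} - active p"
  shows "g \<in> \<sigma> \<longleftrightarrow> h g < w g \<bullet> p"
proof -
  have "w g \<bullet> p \<noteq> h g" using assms(2) by (simp add: active_def)
  with closure_cell_halfspaces[OF assms(1)] assms(2) show ?thesis by force
qed

lemma subset_if_closure_cell:
  assumes "p \<in> closure (cell \<sigma>)"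
  shows "\<sigma> \<subseteq> {1..n}"
proof -
  have "cell \<sigma> \<noteq> {}" using assms by auto
  then obtain x where "codeword x = \<sigma>" by (auto simp: cell_def)
  then show ?thesis using codeword_subset by blast
qed

lemma closest_point_of_cell:
  assumes "\<sigma> \<in> range codeword"
  obtains p where "p \<in> closure (cell \<sigma>)" "norm p = cell_dist \<sigma>"
proof -
  have "closure (cell \<sigma>) \<noteq> {}" using assms by (auto simp: cell_def)
  then obtain p where "p \<in> closure (cell \<sigma>)" "infdist 0 (closure (cell \<sigma>)) = dist 0 p"
    using infdist_attains_inf[OF closed_closure] by metis
  moreover have "infdist 0 (closure (cell \<sigma>)) = cell_dist \<sigma>"
    by (simp add: cell_dist_def infdist_eq_setdist)
  ultimately show ?thesis using that by simp
qed

lemma cell_dist_le_norm: "codeword x = \<sigma> \<Longrightarrow> cell_dist \<sigma> \<le> norm x"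
  unfolding cell_dist_def using infdist_le[of x "cell \<sigma>" 0] by (simp add: cell_def)

lemma dual_basis_active:
  "\<exists>u. \<forall>g\<in>active p. \<forall>g'\<in>active p. w g' \<bullet> u g = (if g' = g then 1 else 0)"
proof -
  have "independent (w ` active p) \<and> inj_on w (active p)"
    by (rule generic_intersections_independent[OF generic]) (auto simp: active_def)
  then show ?thesis using dual_basis_exists[of w "active p"] by blast
qed

text \<open>Moving away from p in direction d, the inactive sides are kept by continuity, and the
  active ones are decided by the sign of w g \<bullet> d (a zero sign keeps x on the negative side).\<close>
lemma eventually_codeword_on_ray:
  assumes "\<tau> \<subseteq> {1..n}"
    and inactive: "\<And>g. g \<in> {1..n} - active p \<Longrightarrow> g \<in> \<tau> \<longleftrightarrow> h g < w g \<bullet> p"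
    and active: "\<And>g. g \<in> active p \<Longrightarrow> (g \<in> \<tau> \<longrightarrow> 0 < w g \<bullet> d) \<and> (g \<notin> \<tau> \<longrightarrow> w g \<bullet> d \<le> 0)"
  shows "eventually (\<lambda>t. codeword (p + t *\<^sub>R d) = \<tau>) (at_right 0)"
proof -
  have "eventually (\<lambda>t. g \<in> \<tau> \<longleftrightarrow> h g < w g \<bullet> (p + t *\<^sub>R d)) (at_right 0)"
    if g: "g \<in> {1..n}" for g
  proof (cases "g \<in> active p")
    case True
    show ?thesis using eventually_at_right_less[of "0::real"]
    proof eventually_elim
      case (elim t)
      have "w g \<bullet> (p + t *\<^sub>R d) = h g + t * (w g \<bullet> d)"
        using True by (simp add: active_def inner_add_right)
      then show ?case using active[OF True] elim by (auto simp: zero_less_mult_iff)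
    qed
  next
    case False
    have lim: "((\<lambda>t. w g \<bullet> (p + t *\<^sub>R d)) \<longlongrightarrow> w g \<bullet> (p + 0 *\<^sub>R d)) (at_right (0::real))"
      by (intro tendsto_intros)
    show ?thesis
    proof (cases "h g < w g \<bullet> p")
      case True
      with lim have "eventually (\<lambda>t. h g < w g \<bullet> (p + t *\<^sub>R d)) (at_right 0)"
        by (auto elim!: order_tendstoD(1))
      moreover have "g \<in> \<tau>" using inactive[of g] True g False by blast
      ultimately show ?thesis by simp
    next
      case below: False
      then have "w g \<bullet> p < h g" using False g by (auto simp: active_def)
      with lim have "eventually (\<lambda>t. w g \<bullet> (p + t *\<^sub>R d) < h g) (at_right 0)"
        by (auto elim!: order_tendstoD(2))
      moreover have "g \<notin> \<tau>" using inactive[of g] below g False by blast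
      ultimately show ?thesis by (auto elim: eventually_mono)
    qed
  qed
  then have "eventually (\<lambda>t. \<forall>g\<in>{1..n}. g \<in> \<tau> \<longleftrightarrow> h g < w g \<bullet> (p + t *\<^sub>R d)) (at_right 0)"
    by (intro eventually_ball_finite) auto
  then show ?thesis
  proof eventually_elim
    case (elim t)
    then show ?case using assms(1) by (auto simp: codeword_def)
  qed
qed

end

section \<open>Descent from the closest point of a cell\<close>

locale closest_point = generic_arrangement n w h for n w and h :: "nat \<Rightarrow> real" +
  fixes \<sigma> :: "nat set" and p :: 'a and u :: "nat \<Rightarrow> 'a"
  assumes closure: "p \<in> closure (cell \<sigma>)"
    and norm_eq: "norm p = cell_dist \<sigma>"
    and dual: "\<And>g g'. g \<in> active p \<Longrightarrow> g' \<in> active p \<Longrightarrow> w g' \<bullet> u g = (if g' = g then 1 else 0)"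
begin

definition side :: "nat \<Rightarrow> real" where
  "side g = (if g \<in> \<sigma> then 1 else -1)"

definition inward :: 'a where
  "inward = (\<Sum>g\<in>active p. side g *\<^sub>R u g)"

definition across :: "nat \<Rightarrow> 'a" where
  "across g = (- side g) *\<^sub>R u g"

lemma inner_inward: "g' \<in> active p \<Longrightarrow> w g' \<bullet> inward = side g'"
proof -
  assume g': "g' \<in> active p"
  have "w g' \<bullet> inward = (\<Sum>g\<in>active p. side g * (w g' \<bullet> u g))"
    by (simp add: inward_def inner_sum_right)
  also have "\<dots> = (\<Sum>g\<in>active p. if g = g' then side g else 0)"
    by (rule sum.cong) (auto simp: dual g')
  also have "\<dots> = side g'" using g' finite_active by simp
  finally show ?thesis .
qed

lemma inner_across:
  "g \<in> active p \<Longrightarrow> g' \<in> active p \<Longrightarrow> w g' \<bullet> across g = (if g' = g then - side g else 0)"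
  by (simp add: across_def dual)

lemma sigma_subset: "\<sigma> \<subseteq> {1..n}"
  using closure by (rule subset_if_closure_cell)

lemma eventually_codeword_near_p:
  assumes "\<And>g. g \<in> active p \<Longrightarrow> (g \<in> \<tau> \<longrightarrow> 0 < w g \<bullet> d) \<and> (g \<notin> \<tau> \<longrightarrow> w g \<bullet> d \<le> 0)"
    and "\<tau> \<subseteq> {1..n}" "\<And>g. g \<in> {1..n} - active p \<Longrightarrow> g \<in> \<tau> \<longleftrightarrow> g \<in> \<sigma>"
  shows "eventually (\<lambda>t. codeword (p + t *\<^sub>R d) = \<tau>) (at_right 0)"
proof (rule eventually_codeword_on_ray)
  show "g \<in> \<tau> \<longleftrightarrow> h g < w g \<bullet> p" if "g \<in> {1..n} - active p" for g
    using assms(3)[OF that] closure_cell_inactive[OF closure that] by simp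
qed (use assms(1,2) in auto)

text \<open>First-order optimality of the closest point p.\<close>
lemma inner_nonneg_if_enters:
  assumes "\<And>g. g \<in> active p \<Longrightarrow> (g \<in> \<sigma> \<longrightarrow> 0 < w g \<bullet> d) \<and> (g \<notin> \<sigma> \<longrightarrow> w g \<bullet> d \<le> 0)"
  shows "0 \<le> p \<bullet> d"
proof -
  have "eventually (\<lambda>t. codeword (p + t *\<^sub>R d) = \<sigma>) (at_right 0)"
    using assms sigma_subset by (intro eventually_codeword_near_p) auto
  then have "eventually (\<lambda>t. 0 \<le> t * (2 * (p \<bullet> d)) + t\<^sup>2 * (d \<bullet> d)) (at_right 0)"
  proof eventually_elim
    case (elim t)
    then have "norm p \<le> norm (p + t *\<^sub>R d)" using cell_dist_le_norm norm_eq by metis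
    then have "p \<bullet> p \<le> (p + t *\<^sub>R d) \<bullet> (p + t *\<^sub>R d)" by (simp add: norm_le)
    then show ?case
      by (simp add: inner_add_left inner_add_right power2_eq_square inner_commute algebra_simps)
  qed
  then show ?thesis using nonneg_if_eventually_nonneg_at_right[of "2 * (p \<bullet> d)"] by simp
qed

lemma inner_across_nonpos:
  assumes g: "g \<in> active p"
  shows "p \<bullet> across g \<le> 0"
proof -
  have "0 \<le> - (p \<bullet> across g) + e * (p \<bullet> inward)" if e: "0 < e" for e
  proof -
    have "0 \<le> p \<bullet> (e *\<^sub>R inward - across g)"
    proof (rule inner_nonneg_if_enters)
      fix g' assume g': "g' \<in> active p"
      have "w g' \<bullet> (e *\<^sub>R inward - across g) = e * side g' + (if g' = g then side g else 0)"
        using g g' by (simp add: inner_diff_right inner_inward inner_across)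
      then show "(g' \<in> \<sigma> \<longrightarrow> 0 < w g' \<bullet> (e *\<^sub>R inward - across g)) \<and>
          (g' \<notin> \<sigma> \<longrightarrow> w g' \<bullet> (e *\<^sub>R inward - across g) \<le> 0)"
        using e by (simp add: side_def)
    qed
    then show ?thesis by (simp add: inner_diff_right)
  qed
  then have "0 \<le> - (p \<bullet> across g)" by (rule nonneg_if_nonneg_perturbations)
  then show ?thesis by simp
qed

lemma inner_eq_0_if_orthogonal_active:
  assumes v: "\<And>g. g \<in> active p \<Longrightarrow> w g \<bullet> v = 0"
  shows "p \<bullet> v = 0"
proof -
  have "0 \<le> b * (p \<bullet> v) + e * (p \<bullet> inward)" if "0 < e" for b e
  proof -
    have "0 \<le> p \<bullet> (b *\<^sub>R v + e *\<^sub>R inward)"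
      by (rule inner_nonneg_if_enters) (use that v in \<open>simp add: inner_add_right inner_inward side_def\<close>)
    then show ?thesis by (simp add: inner_add_right)
  qed
  then have "0 \<le> 1 * (p \<bullet> v)" "0 \<le> (-1) * (p \<bullet> v)"
    by (blast intro: nonneg_if_nonneg_perturbations)+
  then show ?thesis by simp
qed

lemma inner_eq_sum_active: "p \<bullet> x = (\<Sum>g\<in>active p. (w g \<bullet> x) * (p \<bullet> u g))"
proof -
  define v where "v = x - (\<Sum>g\<in>active p. (w g \<bullet> x) *\<^sub>R u g)"
  have "w g' \<bullet> v = 0" if g': "g' \<in> active p" for g'
  proof -
    have "w g' \<bullet> (\<Sum>g\<in>active p. (w g \<bullet> x) *\<^sub>R u g) = (\<Sum>g\<in>active p. if g = g' then w g \<bullet> x else 0)"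
      by (simp add: inner_sum_right) (rule sum.cong, auto simp: dual g')
    also have "\<dots> = w g' \<bullet> x" using g' finite_active by simp
    finally show ?thesis by (simp add: v_def inner_diff_right)
  qed
  then have "p \<bullet> v = 0" by (rule inner_eq_0_if_orthogonal_active)
  then show ?thesis by (simp add: v_def inner_diff_right inner_sum_right)
qed

lemma eventually_codeword_toggle:
  assumes g: "g \<in> active p" and e: "0 < e" "e < 1"
  shows "eventually (\<lambda>t. codeword (p + t *\<^sub>R (across g + e *\<^sub>R inward)) = toggle g \<sigma>) (at_right 0)"
proof (rule eventually_codeword_near_p)
  show "toggle g \<sigma> \<subseteq> {1..n}" using sigma_subset g by (auto simp: toggle_def active_def)
  show "g' \<in> toggle g \<sigma> \<longleftrightarrow> g' \<in> \<sigma>" if "g' \<in> {1..n} - active p" for g'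
    using that g by (auto simp: toggle_def)
  fix g' assume g': "g' \<in> active p"
  have "w g' \<bullet> (across g + e *\<^sub>R inward) = (if g' = g then - side g else 0) + e * side g'"
    using g g' by (simp add: inner_add_right inner_inward inner_across)
  then show "(g' \<in> toggle g \<sigma> \<longrightarrow> 0 < w g' \<bullet> (across g + e *\<^sub>R inward)) \<and>
      (g' \<notin> toggle g \<sigma> \<longrightarrow> w g' \<bullet> (across g + e *\<^sub>R inward) \<le> 0)"
    using e by (auto simp: toggle_def side_def)
qed

lemma toggle_in_range:
  assumes "g \<in> active p"
  shows "toggle g \<sigma> \<in> range codeword"
proof -
  have "eventually (\<lambda>t. codeword (p + t *\<^sub>R (across g + (1/2) *\<^sub>R inward)) = toggle g \<sigma>) (at_right 0)"
    using assms by (rule eventually_codeword_toggle) simp_all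
  then obtain t where "codeword (p + t *\<^sub>R (across g + (1/2) *\<^sub>R inward)) = toggle g \<sigma>"
    using eventually_happens'[OF trivial_limit_at_right_real] by blast
  then show ?thesis by (metis rangeI)
qed

lemma cell_dist_toggle_le:
  assumes "g \<in> active p"
  shows "cell_dist (toggle g \<sigma>) \<le> cell_dist \<sigma>"
proof -
  define d where "d = across g + (1/2) *\<^sub>R inward"
  have "eventually (\<lambda>t. codeword (p + t *\<^sub>R d) = toggle g \<sigma>) (at_right 0)"
    unfolding d_def using assms by (rule eventually_codeword_toggle) simp_all
  then have "eventually (\<lambda>t. cell_dist (toggle g \<sigma>) \<le> norm (p + t *\<^sub>R d)) (at_right 0)"
    by (auto elim: eventually_mono intro: cell_dist_le_norm)
  moreover have "((\<lambda>t. norm (p + t *\<^sub>R d)) \<longlongrightarrow> norm (p + 0 *\<^sub>R d)) (at_right (0::real))"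
    by (intro tendsto_intros)
  ultimately have "cell_dist (toggle g \<sigma>) \<le> norm p"
    using tendsto_lowerbound[OF _ _ trivial_limit_at_right_real] by fastforce
  then show ?thesis using norm_eq by simp
qed

lemma cell_dist_toggle_less:
  assumes g: "g \<in> active p" and descent: "p \<bullet> across g < 0"
  shows "cell_dist (toggle g \<sigma>) < cell_dist \<sigma>"
proof -
  have "((\<lambda>e. p \<bullet> across g + e * (p \<bullet> inward)) \<longlongrightarrow> p \<bullet> across g + 0 * (p \<bullet> inward)) (at_right (0::real))"
    by (intro tendsto_intros)
  then have "eventually (\<lambda>e. p \<bullet> across g + e * (p \<bullet> inward) < 0) (at_right 0)"
    using descent by (auto elim!: order_tendstoD(2))
  with eventually_at_right_real[OF zero_less_one]
  have "eventually (\<lambda>e. e \<in> {0<..<1} \<and> p \<bullet> across g + e * (p \<bullet> inward) < 0) (at_right 0)"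
    by (rule eventually_conj)
  then obtain e where e: "e \<in> {0<..<1}" "p \<bullet> across g + e * (p \<bullet> inward) < 0"
    using eventually_happens'[OF trivial_limit_at_right_real] by blast
  define d where "d = across g + e *\<^sub>R inward"
  have "p \<bullet> d < 0" using e(2) by (simp add: d_def inner_add_right)
  then have "eventually (\<lambda>t. norm (p + t *\<^sub>R d) < norm p) (at_right 0)"
    by (rule eventually_norm_less_at_right)
  moreover have "eventually (\<lambda>t. codeword (p + t *\<^sub>R d) = toggle g \<sigma>) (at_right 0)"
    unfolding d_def using g e(1) by (intro eventually_codeword_toggle) auto
  ultimately have "eventually (\<lambda>t. norm (p + t *\<^sub>R d) < norm p \<and> codeword (p + t *\<^sub>R d) = toggle g \<sigma>) (at_right 0)"
    by (rule eventually_conj)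
  then obtain t where "norm (p + t *\<^sub>R d) < norm p" "codeword (p + t *\<^sub>R d) = toggle g \<sigma>"
    using eventually_happens'[OF trivial_limit_at_right_real] by blast
  with cell_dist_le_norm[of "p + t *\<^sub>R d"] norm_eq show ?thesis by simp
qed

text \<open>Here q - p has negative inner product with p; expanding it in the basis dual to the
  active normals, some summand is negative.\<close>
lemma exists_separating_descent:
  assumes q: "q \<in> closure (cell \<tau>)" "norm q \<le> norm p" "q \<noteq> p"
  shows "\<exists>g\<in>active p. (g \<in> \<sigma> \<longleftrightarrow> g \<notin> \<tau>) \<and> p \<bullet> across g < 0"
proof -
  define x where "x = q - p"
  have "q \<bullet> q = p \<bullet> p + 2 * (p \<bullet> x) + x \<bullet> x"
    by (simp add: x_def inner_diff_left inner_diff_right inner_commute)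
  moreover have "q \<bullet> q \<le> p \<bullet> p" using q(2) by (simp add: norm_le)
  moreover have "0 < x \<bullet> x" using q(3) by (simp add: x_def)
  ultimately have "(\<Sum>g\<in>active p. (w g \<bullet> x) * (p \<bullet> u g)) < 0"
    using inner_eq_sum_active[of x] by linarith
  then obtain g where g: "g \<in> active p" and neg: "(w g \<bullet> x) * (p \<bullet> u g) < 0"
    by (metis (no_types, lifting) not_less sum_nonneg)
  have gn: "g \<in> {1..n}" and wq: "w g \<bullet> q = h g + w g \<bullet> x"
    using g by (auto simp: active_def x_def inner_diff_right)
  have nonpos: "p \<bullet> across g \<le> 0" using g by (rule inner_across_nonpos)
  show ?thesis
  proof (cases "g \<in> \<sigma>")
    case True
    then have "p \<bullet> across g = - (p \<bullet> u g)" by (simp add: across_def side_def)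
    with neg nonpos have "p \<bullet> across g < 0" "w g \<bullet> x < 0"
      by (auto simp: mult_less_0_iff)
    moreover have "g \<notin> \<tau>"
      using closure_cell_halfspaces[OF q(1) gn] wq \<open>w g \<bullet> x < 0\<close> by auto
    ultimately show ?thesis using True g by blast
  next
    case False
    then have "p \<bullet> across g = p \<bullet> u g" by (simp add: across_def side_def)
    with neg nonpos have "p \<bullet> across g < 0" "0 < w g \<bullet> x"
      by (auto simp: mult_less_0_iff)
    moreover have "g \<in> \<tau>"
      using closure_cell_halfspaces[OF q(1) gn] wq \<open>0 < w g \<bullet> x\<close> by auto
    ultimately show ?thesis using False g by blast
  qed
qed

lemma exists_active_in_diff:
  assumes \<tau>: "p \<in> closure (cell \<tau>)" "card \<tau> \<le> card \<sigma>" "\<tau> \<noteq> \<sigma>"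
  shows "\<exists>f\<in>active p. f \<in> \<sigma> \<and> f \<notin> \<tau>"
proof -
  have "\<not> \<sigma> \<subseteq> \<tau>"
  proof
    assume sub: "\<sigma> \<subseteq> \<tau>"
    have fin: "finite \<tau>" using subset_if_closure_cell[OF \<tau>(1)] finite_subset by blast
    then have "card \<sigma> = card \<tau>" using card_mono[OF fin sub] \<tau>(2) by linarith
    with card_subset_eq[OF fin sub] \<tau>(3) show False by simp
  qed
  then obtain f where f: "f \<in> \<sigma>" "f \<notin> \<tau>" by blast
  have "f \<in> active p"
  proof (rule ccontr)
    assume "f \<notin> active p"
    then have inactive: "f \<in> {1..n} - active p" using f(1) sigma_subset by blast
    show False
      using f closure_cell_inactive[OF closure inactive] closure_cell_inactive[OF \<tau>(1) inactive] by simp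
  qed
  with f show ?thesis by blast
qed

lemma descending_toggle:
  assumes \<tau>: "\<tau> \<in> range codeword" "\<tau> \<noteq> \<sigma>" "cell_key \<tau> \<le> cell_key \<sigma>"
  shows "\<exists>e. (e \<in> \<sigma> \<longleftrightarrow> e \<notin> \<tau>) \<and> toggle e \<sigma> \<in> range codeword \<and> cell_key (toggle e \<sigma>) < cell_key \<sigma>"
proof -
  obtain q where q: "q \<in> closure (cell \<tau>)" "norm q = cell_dist \<tau>"
    using closest_point_of_cell[OF \<tau>(1)] .
  have key: "cell_dist \<tau> < cell_dist \<sigma> \<or> cell_dist \<tau> = cell_dist \<sigma> \<and> card \<tau> \<le> card \<sigma>"
    using \<tau>(3) cell_key_le_iff by blast
  show ?thesis
  proof (cases "q = p")
    case False
    moreover have "norm q \<le> norm p" using q(2) key norm_eq by linarith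
    ultimately obtain g where g: "g \<in> active p" "g \<in> \<sigma> \<longleftrightarrow> g \<notin> \<tau>" "p \<bullet> across g < 0"
      using exists_separating_descent[OF q(1)] by blast
    then have "cell_key (toggle g \<sigma>) < cell_key \<sigma>"
      using cell_dist_toggle_less cell_key_less_iff by blast
    with g toggle_in_range show ?thesis by blast
  next
    case True
    then have "card \<tau> \<le> card \<sigma>" using q(2) key norm_eq by auto
    then obtain f where f: "f \<in> active p" "f \<in> \<sigma>" "f \<notin> \<tau>"
      using exists_active_in_diff q(1) True \<tau>(2) by blast
    have "finite \<sigma>" using sigma_subset finite_subset by blast
    then have "card (toggle f \<sigma>) < card \<sigma>"
      using f(2) card_gt_0_iff[of \<sigma>] by (auto simp: toggle_def)
    then have "cell_key (toggle f \<sigma>) < cell_key \<sigma>"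
      using cell_dist_toggle_le[OF f(1)] cell_key_less_iff by fastforce
    with f toggle_in_range show ?thesis by blast
  qed
qed

end

lemma (in generic_arrangement) descending_toggle_exists:
  assumes "\<sigma> \<in> range codeword" "\<tau> \<in> range codeword" "\<tau> \<noteq> \<sigma>" "cell_key \<tau> \<le> cell_key \<sigma>"
  shows "\<exists>e. (e \<in> \<sigma> \<longleftrightarrow> e \<notin> \<tau>) \<and> toggle e \<sigma> \<in> range codeword \<and> cell_key (toggle e \<sigma>) < cell_key \<sigma>"
proof -
  obtain p where p: "p \<in> closure (cell \<sigma>)" "norm p = cell_dist \<sigma>"
    using closest_point_of_cell[OF assms(1)] .
  obtain u where u: "\<forall>g\<in>active p. \<forall>g'\<in>active p. w g' \<bullet> u g = (if g' = g then 1 else 0)"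
    using dual_basis_active by blast
  interpret closest_point n w h \<sigma> p u
    using p u by unfold_locales auto
  show ?thesis using descending_toggle assms(2-4) .
qed

theorem lemma7p2:
  fixes n :: nat and w :: "nat \<Rightarrow> 'a::euclidean_space" and h :: "nat \<Rightarrow> real"
  assumes "\<forall>i\<in>{1..n}. w i \<noteq> 0"
    and "generic_intersections n w h"
  shows "shellable (polar_complex n (hcode n w h))"
proof -
  interpret generic_arrangement n w h by unfold_locales (rule assms(2))
  show ?thesis
    unfolding hcode_eq_range_codeword
  proof (rule shellable_polar_complexI)
    show "range codeword \<subseteq> Pow {1..n}" using codeword_subset by blast
    show "range codeword \<noteq> {}" by blast
  qed (rule descending_toggle_exists)
qed

end
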